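(* A semigroup $X$ is inverse if and only if there is an inverse subsemigroup $S\subset\upsilon(X)$ with $X\subset S$ (where $X$ is identified with the set of principal ultrafilters $\langle x\rangle$, $x\in X$).
   Context: An upfamily on $X$ is a family of nonempty subsets of $X$ closed under taking supersets in $X$; $\upsilon(X)$ is the set of all upfamilies, with operation $\mathcal A*\mathcal B=\big\langle \bigcup_{a\in A} a*B_a : A\in\mathcal A,\ \{B_a\}_{a\in A}\subset\mathcal B\big\rangle$, where $\langle\mathcal C\rangle=\{A\subset X:\exists C\in\mathcal C,\ C\subset A\}$; $x\in X$ is identified with $\langle x\rangle=\{A\subset X:x\in A\}$. A semigroup $S$ is inverse if each $x\in S$ has a unique $x^{-1}\in S$ with $xx^{-1}x=x$ and $x^{-1}xx^{-1}=x^{-1}$. *)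

theory Defs
  imports Main
begin

definition upclosure :: "'a set set \<Rightarrow> 'a set set" where
  "upclosure C = {A. \<exists>D\<in>C. D \<subseteq> A}"

definition upfamily :: "'a set set \<Rightarrow> bool" where
  "upfamily F \<longleftrightarrow> (\<forall>A\<in>F. A \<noteq> {}) \<and> (\<forall>A B. A \<in> F \<longrightarrow> A \<subseteq> B \<longrightarrow> B \<in> F)"

definition upmult :: "'a::semigroup_mult set set \<Rightarrow> 'a set set \<Rightarrow> 'a set set" where
  "upmult \<A> \<B> = upclosure
     {(\<Union>a\<in>A. (\<lambda>b. a * b) ` Bf a) | A Bf. A \<in> \<A> \<and> (\<forall>a\<in>A. Bf a \<in> \<B>)}"

definition princ :: "'a \<Rightarrow> 'a set set" where
  "princ x = {A. x \<in> A}"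

definition inverse_semigroup_on :: "'b set \<Rightarrow> ('b \<Rightarrow> 'b \<Rightarrow> 'b) \<Rightarrow> bool" where
  "inverse_semigroup_on S f \<longleftrightarrow>
     (\<forall>x\<in>S. \<forall>y\<in>S. f x y \<in> S) \<and>
     (\<forall>x\<in>S. \<forall>y\<in>S. \<forall>z\<in>S. f (f x y) z = f x (f y z)) \<and>
     (\<forall>x\<in>S. \<exists>!y. y \<in> S \<and> f (f x y) x = x \<and> f (f y x) y = y)"

end

theory Submission
  imports Defs
begin

(* The map princ is an injective homomorphism X \<rightarrow> v(X) (princ_mult, inj_princ).
   Forward direction: the image of an inverse semigroup under an injective homomorphism
   is again an inverse semigroup (inverse_semigroup_image), so S = range princ works.
   Backward direction (inverse_semigroup_if_embedded), for an inverse
   S \<supseteq> range princ of upfamilies and x \<in> X: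
   - existence: the inverse F of <x> in S is an upfamily, and <x> * F * <x> = <x>
     forces x * b * x = x for some b (regular_of_upfamily_inverse); then b * x * b is
     an inverse of x (regular_imp_inverse);
   - uniqueness: two inverses y, z of x give inverses <y>, <z> of <x> in S, which
     coincide, so y = z by injectivity (inverse_unique_by_embedding). *)

lemma princ_mult: "upmult (princ x) (princ y) = princ ((x::'a::semigroup_mult) * y)"
proof
  show "upmult (princ x) (princ y) \<subseteq> princ (x * y)"
    unfolding upmult_def upclosure_def princ_def by blast
next
  show "princ (x * y) \<subseteq> upmult (princ x) (princ y)"
  proof
    fix A assume "A \<in> princ (x * y)"
    hence "(\<Union>a\<in>{x}. (\<lambda>b. a * b) ` (\<lambda>_. {y}) a) \<subseteq> A"
      by (simp add: princ_def)
    moreover have "(\<Union>a\<in>{x}. (\<lambda>b. a * b) ` (\<lambda>_. {y}) a) \<in>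
      {(\<Union>a\<in>A. (\<lambda>b. a * b) ` Bf a) | A Bf. A \<in> princ x \<and> (\<forall>a\<in>A. Bf a \<in> princ y)}"
      by (rule CollectI, rule exI[of _ "{x}"], rule exI[of _ "\<lambda>_. {y}"])
        (auto simp: princ_def)
    ultimately show "A \<in> upmult (princ x) (princ y)"
      unfolding upmult_def upclosure_def by blast
  qed
qed

lemma inj_princ: "inj princ"
  by (rule injI) (auto simp: princ_def)

lemma upfamily_princ: "upfamily (princ x)"
  by (auto simp: upfamily_def princ_def)

lemma inverse_semigroup_on_inverse:
  assumes "inverse_semigroup_on S f" and "x \<in> S"
  shows "\<exists>!y. y \<in> S \<and> f (f x y) x = x \<and> f (f y x) y = y"
  using assms by (simp add: inverse_semigroup_on_def)

lemma inverse_semigroup_image: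
  assumes inv: "inverse_semigroup_on A f"
    and hom: "\<And>x y. x \<in> A \<Longrightarrow> y \<in> A \<Longrightarrow> h (f x y) = g (h x) (h y)"
    and inj: "inj_on h A"
  shows "inverse_semigroup_on (h ` A) g"
proof -
  have closed: "\<And>x y. x \<in> A \<Longrightarrow> y \<in> A \<Longrightarrow> f x y \<in> A"
    and assoc: "\<And>x y z. x \<in> A \<Longrightarrow> y \<in> A \<Longrightarrow> z \<in> A \<Longrightarrow> f (f x y) z = f x (f y z)"
    using inv by (simp_all add: inverse_semigroup_on_def)
  have hom3: "\<And>a b. a \<in> A \<Longrightarrow> b \<in> A \<Longrightarrow> h (f (f a b) a) = g (g (h a) (h b)) (h a)"
    using hom closed by metis
  show ?thesis
    unfolding inverse_semigroup_on_def
  proof (intro conjI ballI)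
    fix u v w assume "u \<in> h ` A" "v \<in> h ` A" "w \<in> h ` A"
    then obtain x y z where xyz: "x \<in> A" "y \<in> A" "z \<in> A" "u = h x" "v = h y" "w = h z"
      by blast
    show "g u v \<in> h ` A"
      using xyz closed hom by (metis image_eqI)
    show "g (g u v) w = g u (g v w)"
      using xyz closed hom assoc by metis
  next
    fix u assume "u \<in> h ` A"
    then obtain x where x: "x \<in> A" "u = h x" by blast
    from inverse_semigroup_on_inverse[OF inv x(1)] obtain y
      where y: "y \<in> A" "f (f x y) x = x" "f (f y x) y = y"
      and unique: "\<And>z. z \<in> A \<Longrightarrow> f (f x z) x = x \<Longrightarrow> f (f z x) z = z \<Longrightarrow> z = y"
      by blast
    show "\<exists>!v. v \<in> h ` A \<and> g (g u v) u = u \<and> g (g v u) v = v"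
    proof (rule ex1I[of _ "h y"])
      have "g (g (h x) (h y)) (h x) = h x" "g (g (h y) (h x)) (h y) = h y"
        using hom3[OF x(1) y(1)] hom3[OF y(1) x(1)] y(2,3) by simp_all
      thus "h y \<in> h ` A \<and> g (g u (h y)) u = u \<and> g (g (h y) u) (h y) = h y"
        using x y(1) by simp
    next
      fix v assume v: "v \<in> h ` A \<and> g (g u v) u = u \<and> g (g v u) v = v"
      then obtain z where z: "z \<in> A" "v = h z" by blast
      text \<open>Injectivity pulls the inverse equations back from the image to A.\<close>
      have "f (f x z) x = x" "f (f z x) z = z"
        using v x z hom3 inj closed by (metis inj_onD)+
      thus "v = h y" using unique z by simp
    qed
  qed
qed

lemma inverse_unique_by_embedding:
  fixes h :: "'a::semigroup_mult \<Rightarrow> 'b" and x y z :: 'a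
  assumes inv: "inverse_semigroup_on S g"
    and into: "range h \<subseteq> S"
    and hom: "\<And>x y. h (x * y) = g (h x) (h y)"
    and inj: "inj h"
    and y: "x * y * x = x" "y * x * y = y"
    and z: "x * z * x = x" "z * x * z = z"
  shows "y = z"
proof -
  have "\<exists>!v. v \<in> S \<and> g (g (h x) v) (h x) = h x \<and> g (g v (h x)) v = v"
    using inverse_semigroup_on_inverse[OF inv] into by blast
  moreover have "\<And>w. x * w * x = x \<Longrightarrow> w * x * w = w \<Longrightarrow>
      h w \<in> S \<and> g (g (h x) (h w)) (h x) = h x \<and> g (g (h w) (h x)) (h w) = h w"
    using into hom by (metis rangeI subsetD)
  ultimately have "h y = h z" using y z by blast
  with inj show ?thesis by (rule injD)
qed

lemma regular_imp_inverse:
  fixes x b :: "'a::semigroup_mult"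
  assumes b: "x * b * x = x"
  shows "x * (b * x * b) * x = x" "(b * x * b) * x * (b * x * b) = b * x * b"
proof -
  have "x * (b * x * b) * x = (x * b * x) * b * x" by (simp add: mult.assoc)
  also have "\<dots> = x" using b by simp
  finally show "x * (b * x * b) * x = x" .
  have "(b * x * b) * x * (b * x * b) = b * ((x * b * x) * b * x) * b"
    by (simp add: mult.assoc)
  also have "\<dots> = b * x * b" using b by (simp add: mult.assoc)
  finally show "(b * x * b) * x * (b * x * b) = b * x * b" .
qed

lemma upmult_memE:
  assumes "A \<in> upmult F G"
  obtains A' Bf where "A' \<in> F" "\<forall>a\<in>A'. Bf a \<in> G"
    "(\<Union>a\<in>A'. (\<lambda>b. a * b) ` Bf a) \<subseteq> A"
  using assms unfolding upmult_def upclosure_def by blast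

text \<open>If <x> * F * <x> = <x> for some upfamily F, then x is regular: the set {x}
  belongs to the product, and tracing it back through the definition of the
  operation produces an element b of some member of F with x * b * x = x.\<close>
lemma regular_of_upfamily_inverse:
  fixes x :: "'a::semigroup_mult"
  assumes F: "upfamily F" and eq: "upmult (upmult (princ x) F) (princ x) = princ x"
  shows "\<exists>b. x * b * x = x"
proof -
  have "{x} \<in> upmult (upmult (princ x) F) (princ x)" using eq by (simp add: princ_def)
  then obtain A Bf where A: "A \<in> upmult (princ x) F" and Bf: "\<forall>a\<in>A. x \<in> Bf a"
    and sub: "(\<Union>a\<in>A. (\<lambda>b. a * b) ` Bf a) \<subseteq> {x}"
    by (rule upmult_memE) (auto simp: princ_def)
  from A obtain A' Cf where "x \<in> A'" and Cf: "Cf x \<in> F"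
    and sub': "(\<Union>a\<in>A'. (\<lambda>b. a * b) ` Cf a) \<subseteq> A"
    by (rule upmult_memE) (auto simp: princ_def)
  obtain b where "b \<in> Cf x" using F Cf unfolding upfamily_def by blast
  hence "x * b \<in> A" using sub' \<open>x \<in> A'\<close> by blast
  hence "x * b * x = x" using sub Bf by blast
  thus ?thesis ..
qed

lemma inverse_semigroup_if_embedded:
  fixes S :: "'a::semigroup_mult set set set"
  assumes up: "S \<subseteq> {F. upfamily F}" and inv: "inverse_semigroup_on S upmult"
    and into: "range (princ :: 'a \<Rightarrow> 'a set set) \<subseteq> S"
  shows "inverse_semigroup_on (UNIV :: 'a set) (*)"
proof -
  have unique: "y = z" if "x * y * x = x" "y * x * y = y" "x * z * x = x" "z * x * z = z"
    for x y z :: 'a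
    using inverse_unique_by_embedding[OF inv into princ_mult[symmetric] inj_princ] that .
  have regular: "\<exists>b. x * b * x = x" for x :: 'a
  proof -
    have "princ x \<in> S" using into by blast
    then obtain F where "F \<in> S" "upmult (upmult (princ x) F) (princ x) = princ x"
      using inverse_semigroup_on_inverse[OF inv] by (metis ex1_implies_ex)
    thus ?thesis using up regular_of_upfamily_inverse by blast
  qed
  show ?thesis
    unfolding inverse_semigroup_on_def
  proof (intro conjI ballI)
    fix x :: 'a
    obtain b where "x * b * x = x" using regular by blast
    thus "\<exists>!y. y \<in> UNIV \<and> x * y * x = x \<and> y * x * y = y"
      using regular_imp_inverse unique by (intro ex1I[of _ "b * x * b"]) auto
  qed (simp_all add: mult.assoc)
qed

theorem corollary3p2:
  fixes X :: "'a::semigroup_mult itself"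
  shows "inverse_semigroup_on (UNIV :: 'a set) (*) \<longleftrightarrow>
    (\<exists>S. S \<subseteq> {F :: 'a set set. upfamily F} \<and> inverse_semigroup_on S upmult
         \<and> range (princ :: 'a \<Rightarrow> 'a set set) \<subseteq> S)"
proof
  assume "inverse_semigroup_on (UNIV :: 'a set) (*)"
  hence "inverse_semigroup_on (range (princ :: 'a \<Rightarrow> 'a set set)) upmult"
    by (rule inverse_semigroup_image) (simp_all add: princ_mult inj_princ)
  moreover have "range (princ :: 'a \<Rightarrow> 'a set set) \<subseteq> {F. upfamily F}"
    by (auto intro: upfamily_princ)
  ultimately show "\<exists>S. S \<subseteq> {F :: 'a set set. upfamily F} \<and> inverse_semigroup_on S upmult
         \<and> range (princ :: 'a \<Rightarrow> 'a set set) \<subseteq> S" by blast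
next
  assume "\<exists>S. S \<subseteq> {F :: 'a set set. upfamily F} \<and> inverse_semigroup_on S upmult
         \<and> range (princ :: 'a \<Rightarrow> 'a set set) \<subseteq> S"
  thus "inverse_semigroup_on (UNIV :: 'a set) (*)"
    using inverse_semigroup_if_embedded by blast
qed

end
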